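(* Let $N\geq1$ and $0<m<2$. Let $a\in C(\mathbb{R}^N)\cap L^\infty(\mathbb{R}^N)$ with $a^+=\max\{0,a\}\not\equiv0$ and $\limsup_{|x|\to\infty}a(x)<0$. Let $J\in L^1(\mathbb{R}^N)$ be a nonnegative radially symmetric function with $\int_{\mathbb{R}^N}J=1$, and for $\varepsilon>0$ let $J_\varepsilon(z)=\varepsilon^{-N}J(z/\varepsilon)$. Suppose there exist $\varepsilon_0>0$ and a nonnegative, nontrivial $\underline{u}\in C_c(\mathbb{R}^N)$ such that for all $0<\varepsilon<\varepsilon_0$, $$\frac{1}{\varepsilon^m}\big(J_\varepsilon\ast\underline{u}-\underline{u}\big)+\underline{u}(a-\underline{u})\geq0\quad\text{in }\mathbb{R}^N.$$ Then $$\limsup_{\beta\to m^-}(m-\beta)\int_{\mathbb{R}^N}J(x)|x|^\beta\,\mathrm{d}x<\infty.$$ In particular, $\int_{\mathbb{R}^N}J(x)|x|^\beta\,\mathrm{d}x<\infty$ for all $0<\beta<m$.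
   Context: $(J_\varepsilon\ast u)(x)=\int_{\mathbb{R}^N}J_\varepsilon(x-y)u(y)\,\mathrm{d}y$. *)

theory Defs
  imports "HOL-Analysis.Analysis"
begin

definition rescaled_kernel :: "('a::euclidean_space \<Rightarrow> real) \<Rightarrow> real \<Rightarrow> 'a \<Rightarrow> real" where
  "rescaled_kernel J \<epsilon> z = J ((1 / \<epsilon>) *\<^sub>R z) / \<epsilon> ^ DIM('a)"

definition conv :: "('a::euclidean_space \<Rightarrow> real) \<Rightarrow> ('a \<Rightarrow> real) \<Rightarrow> 'a \<Rightarrow> real" where
  "conv J u x = (\<integral>y. J (x - y) * u y \<partial>lborel)"

end

(* At a maximum point x0 of u the subsolution inequality gives
   (J_eps * u)(x0) >= u(x0) - eps^m u(x0) (a(x0) - u(x0)), while, u vanishing outside a ball of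
   radius R, (J_eps * u)(x0) <= u(x0) (1 - mass of J outside the ball of radius 2R/eps).
   Hence the mass of J beyond radius t is O(t^-m). Summing this over the dyadic shells
   2^k T < |x| <= 2^(k+1) T bounds the beta-th moment of J by
   T^beta + C 2^beta T^(beta-m) / (1 - 2^(beta-m)), and (m - beta) / (1 - 2^(beta-m)) stays
   bounded as beta tends to m. *)

theory Submission
  imports Defs
begin

lemma nn_integral_euclidean_affine:
  fixes f :: "'a::euclidean_space \<Rightarrow> ennreal" and t :: 'a
  assumes [measurable]: "f \<in> borel_measurable borel" and c: "c \<noteq> 0"
  shows "(\<integral>\<^sup>+x. f x \<partial>lborel) = ennreal (\<bar>c\<bar> ^ DIM('a)) * (\<integral>\<^sup>+x. f (t + c *\<^sub>R x) \<partial>lborel)"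
  by (subst lborel_affine[OF c, of t])
    (simp add: nn_integral_density nn_integral_distr nn_integral_cmult)

lemma conv_rescaled_kernel_eq:
  fixes J u :: "'a::euclidean_space \<Rightarrow> real"
  assumes [measurable]: "J \<in> borel_measurable borel" "u \<in> borel_measurable borel"
    and J_nonneg: "\<And>z. J z \<ge> 0" and u_nonneg: "\<And>y. u y \<ge> 0" and \<epsilon>: "\<epsilon> > 0"
  shows "conv (rescaled_kernel J \<epsilon>) u x = (\<integral>z. J z * u (x - \<epsilon> *\<^sub>R z) \<partial>lborel)"
proof -
  have meas: "(\<lambda>y. rescaled_kernel J \<epsilon> (x - y) * u y) \<in> borel_measurable lborel"
    unfolding rescaled_kernel_def by measurable
  have "conv (rescaled_kernel J \<epsilon>) u x
      = enn2real (\<integral>\<^sup>+y. ennreal (rescaled_kernel J \<epsilon> (x - y) * u y) \<partial>lborel)"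
    unfolding conv_def using meas \<epsilon> J_nonneg u_nonneg
    by (intro integral_eq_nn_integral) (auto simp: rescaled_kernel_def)
  also have "(\<integral>\<^sup>+y. ennreal (rescaled_kernel J \<epsilon> (x - y) * u y) \<partial>lborel)
      = ennreal (\<epsilon> ^ DIM('a)) *
        (\<integral>\<^sup>+z. ennreal (rescaled_kernel J \<epsilon> (\<epsilon> *\<^sub>R z) * u (x - \<epsilon> *\<^sub>R z)) \<partial>lborel)"
    using \<epsilon> nn_integral_euclidean_affine[of "\<lambda>y. ennreal (rescaled_kernel J \<epsilon> (x - y) * u y)"
        "-\<epsilon>" x]
    by (simp add: rescaled_kernel_def)
  also have "\<dots> = (\<integral>\<^sup>+z. ennreal (J z * u (x - \<epsilon> *\<^sub>R z)) \<partial>lborel)"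
    using \<epsilon> by (subst nn_integral_cmult[symmetric])
      (auto intro!: nn_integral_cong simp: rescaled_kernel_def ennreal_mult'[symmetric])
  also have "enn2real \<dots> = (\<integral>z. J z * u (x - \<epsilon> *\<^sub>R z) \<partial>lborel)"
    using J_nonneg u_nonneg by (intro integral_eq_nn_integral[symmetric]) auto
  finally show ?thesis .
qed

lemma conv_rescaled_kernel_le_tail:
  fixes J u :: "'a::euclidean_space \<Rightarrow> real"
  assumes J_int: "integrable lborel J" and J_nonneg: "\<And>z. J z \<ge> 0"
    and J_mass: "(\<integral>z. J z \<partial>lborel) = 1"
    and u_meas: "u \<in> borel_measurable borel" and u_nonneg: "\<And>y. u y \<ge> 0"
    and u_le: "\<And>y. u y \<le> M" and u_supp: "\<And>y. R < norm y \<Longrightarrow> u y = 0"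
    and x: "norm x \<le> R" and \<epsilon>: "\<epsilon> > 0"
  shows "conv (rescaled_kernel J \<epsilon>) u x \<le> M * (1 - (\<integral>z\<in>{z. 2 * R / \<epsilon> < norm z}. J z \<partial>lborel))"
proof -
  let ?far = "{z. 2 * R / \<epsilon> < norm z}"
  have J_meas: "J \<in> borel_measurable borel"
    using borel_measurable_integrable[OF J_int] by simp
  have M: "0 \<le> M" using u_nonneg u_le order_trans by blast
  have pointwise: "J z * u (x - \<epsilon> *\<^sub>R z) \<le> M * (J z - J z * indicator ?far z)" for z
  proof (cases "z \<in> ?far")
    case True
    then have "2 * R < \<epsilon> * norm z" using \<epsilon> by (simp add: pos_divide_less_eq mult.commute)
    moreover have "\<epsilon> * norm z \<le> norm (x - \<epsilon> *\<^sub>R z) + norm x"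
      using norm_triangle_ineq4[of x "x - \<epsilon> *\<^sub>R z"] \<epsilon> by simp
    ultimately have "R < norm (x - \<epsilon> *\<^sub>R z)" using x by linarith
    with True show ?thesis using u_supp by simp
  next
    case False
    then show ?thesis
      using u_le[of "x - \<epsilon> *\<^sub>R z"] J_nonneg[of z] by (simp add: mult_left_mono mult.commute[of M])
  qed
  have "conv (rescaled_kernel J \<epsilon>) u x \<le> (\<integral>z. M * (J z - J z * indicator ?far z) \<partial>lborel)"
    unfolding conv_rescaled_kernel_eq[OF J_meas u_meas J_nonneg u_nonneg \<epsilon>]
    using J_int M J_nonneg pointwise integrable_real_mult_indicator[OF _ J_int, of ?far]
    by (intro integral_mono') (auto simp: indicator_def)
  also have "\<dots> = M * (1 - (\<integral>z\<in>?far. J z \<partial>lborel))"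
    using J_int J_mass integrable_real_mult_indicator[OF _ J_int, of ?far]
    by (simp add: set_lebesgue_integral_def mult.commute)
  finally show ?thesis .
qed

lemma nonneg_compact_support_peak:
  fixes u :: "'a::euclidean_space \<Rightarrow> real"
  assumes u_cont: "continuous_on UNIV u" and u_supp: "compact (closure {x. u x \<noteq> 0})"
    and u_nonneg: "\<And>x. u x \<ge> 0" and u_nontriv: "\<exists>x. u x \<noteq> 0"
  obtains x\<^sub>0 R where "\<And>y. u y \<le> u x\<^sub>0" "u x\<^sub>0 > 0" "0 < R" "norm x\<^sub>0 \<le> R"
    "\<And>y. R < norm y \<Longrightarrow> u y = 0"
proof -
  let ?K = "closure {x. u x \<noteq> 0}"
  have in_K: "y \<in> ?K" if "u y \<noteq> 0" for y
    using that closure_subset[of "{x. u x \<noteq> 0}"] by auto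
  obtain x\<^sub>1 where x\<^sub>1: "u x\<^sub>1 \<noteq> 0" using u_nontriv by blast
  then have "?K \<noteq> {}" using in_K by blast
  then obtain x\<^sub>0 where x\<^sub>0: "x\<^sub>0 \<in> ?K" "\<And>y. y \<in> ?K \<Longrightarrow> u y \<le> u x\<^sub>0"
    using continuous_attains_sup[OF u_supp _ continuous_on_subset[OF u_cont subset_UNIV]] by meson
  have peak: "u y \<le> u x\<^sub>0" for y
    using x\<^sub>0 in_K[of y] u_nonneg[of x\<^sub>0] by (cases "u y = 0") auto
  obtain R where R: "0 < R" "\<And>y. y \<in> ?K \<Longrightarrow> norm y \<le> R"
    using compact_imp_bounded[OF u_supp] unfolding bounded_pos by blast
  show thesis
  proof
    show "u y \<le> u x\<^sub>0" for y by (rule peak)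
    show "u x\<^sub>0 > 0" using peak[of x\<^sub>1] u_nonneg[of x\<^sub>1] x\<^sub>1 by linarith
    show "0 < R" "norm x\<^sub>0 \<le> R" using R x\<^sub>0(1) by auto
    show "u y = 0" if "R < norm y" for y
      using R(2)[OF in_K, of y] that by fastforce
  qed
qed

lemma tail_mass_le_of_subsolution_at_peak:
  fixes J u a :: "'a::euclidean_space \<Rightarrow> real"
  assumes J_int: "integrable lborel J" and J_nonneg: "\<And>z. J z \<ge> 0"
    and J_mass: "(\<integral>z. J z \<partial>lborel) = 1"
    and u_meas: "u \<in> borel_measurable borel" and u_nonneg: "\<And>y. u y \<ge> 0"
    and peak: "\<And>y. u y \<le> u x\<^sub>0" "u x\<^sub>0 > 0"
    and u_supp: "\<And>y. R < norm y \<Longrightarrow> u y = 0" and x\<^sub>0: "norm x\<^sub>0 \<le> R" and \<epsilon>: "\<epsilon> > 0"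
    and subsol: "(1 / \<epsilon> powr m) * (conv (rescaled_kernel J \<epsilon>) u x\<^sub>0 - u x\<^sub>0)
      + u x\<^sub>0 * (a x\<^sub>0 - u x\<^sub>0) \<ge> 0"
  shows "(\<integral>z\<in>{z. 2 * R / \<epsilon> < norm z}. J z \<partial>lborel) \<le> (a x\<^sub>0 - u x\<^sub>0) * \<epsilon> powr m"
proof -
  let ?M = "u x\<^sub>0" and ?P = "(\<integral>z\<in>{z. 2 * R / \<epsilon> < norm z}. J z \<partial>lborel)"
    and ?c = "conv (rescaled_kernel J \<epsilon>) u x\<^sub>0"
  have "?c \<le> ?M * (1 - ?P)"
    by (rule conv_rescaled_kernel_le_tail[OF J_int J_nonneg J_mass u_meas u_nonneg peak(1) u_supp
          x\<^sub>0 \<epsilon>])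
  moreover have "?M - \<epsilon> powr m * (?M * (a x\<^sub>0 - ?M)) \<le> ?c"
  proof -
    have "0 \<le> \<epsilon> powr m * ((1 / \<epsilon> powr m) * (?c - ?M) + ?M * (a x\<^sub>0 - ?M))"
      using subsol \<epsilon> by simp
    also have "\<dots> = ?c - ?M + \<epsilon> powr m * (?M * (a x\<^sub>0 - ?M))"
      using \<epsilon> by (simp add: distrib_left)
    finally show ?thesis by linarith
  qed
  ultimately have "?M * ?P \<le> ?M * ((a x\<^sub>0 - ?M) * \<epsilon> powr m)"
    by (simp add: algebra_simps)
  then show ?thesis using peak(2) by simp
qed

lemma kernel_tail_decay_of_subsolution:
  fixes a J u :: "'a::euclidean_space \<Rightarrow> real" and m \<epsilon>\<^sub>0 :: real
  assumes J_int: "integrable lborel J" and J_nonneg: "\<And>z. J z \<ge> 0"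
    and J_mass: "(\<integral>z. J z \<partial>lborel) = 1"
    and eps0_pos: "\<epsilon>\<^sub>0 > 0"
    and u_cont: "continuous_on UNIV u"
    and u_supp: "compact (closure {x. u x \<noteq> 0})"
    and u_nonneg: "\<And>x. u x \<ge> 0"
    and u_nontriv: "\<exists>x. u x \<noteq> 0"
    and subsol: "\<And>\<epsilon> x. 0 < \<epsilon> \<Longrightarrow> \<epsilon> < \<epsilon>\<^sub>0 \<Longrightarrow>
        (1 / \<epsilon> powr m) * (conv (rescaled_kernel J \<epsilon>) u x - u x) + u x * (a x - u x) \<ge> 0"
  shows "\<exists>C\<ge>0. \<forall>\<^sub>F t in at_top. (\<integral>z\<in>{z. t < norm z}. J z \<partial>lborel) \<le> C * t powr -m"
proof -
  obtain x\<^sub>0 R where peak: "\<And>y. u y \<le> u x\<^sub>0" "u x\<^sub>0 > 0" and R: "0 < R" "norm x\<^sub>0 \<le> R"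
    and u_supp_R: "\<And>y. R < norm y \<Longrightarrow> u y = 0"
    using nonneg_compact_support_peak[OF u_cont u_supp u_nonneg u_nontriv] by blast
  have u_meas: "u \<in> borel_measurable borel"
    using u_cont by (rule borel_measurable_continuous_onI)
  define C where "C = max 0 (a x\<^sub>0 - u x\<^sub>0) * (2 * R) powr m"
  have "(\<integral>z\<in>{z. t < norm z}. J z \<partial>lborel) \<le> C * t powr -m"
    if t: "2 * R / \<epsilon>\<^sub>0 < t" for t
  proof -
    have "0 < t" using t R eps0_pos by (smt (verit) divide_pos_pos)
    define \<epsilon> where "\<epsilon> = 2 * R / t"
    have \<epsilon>: "0 < \<epsilon>" "\<epsilon> < \<epsilon>\<^sub>0"
      using t R \<open>0 < t\<close> eps0_pos by (auto simp: \<epsilon>_def divide_less_eq mult.commute)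
    have "2 * R / \<epsilon> = t" using R \<open>0 < t\<close> by (simp add: \<epsilon>_def)
    moreover have "\<epsilon> powr m = (2 * R) powr m * t powr -m"
      using R \<open>0 < t\<close> by (simp add: \<epsilon>_def powr_divide powr_minus_divide)
    moreover have "(a x\<^sub>0 - u x\<^sub>0) * \<epsilon> powr m \<le> max 0 (a x\<^sub>0 - u x\<^sub>0) * \<epsilon> powr m"
      by (intro mult_right_mono) auto
    ultimately show ?thesis
      using tail_mass_le_of_subsolution_at_peak[where a = a, OF J_int J_nonneg J_mass u_meas
          u_nonneg peak u_supp_R R(2) \<epsilon>(1) subsol[OF \<epsilon>, of x\<^sub>0]]
      by (simp add: C_def mult.assoc)
  qed
  moreover have "0 \<le> C" unfolding C_def by simp
  ultimately show ?thesis
    by (intro exI[of _ C] conjI eventually_mono[OF eventually_gt_at_top]) auto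
qed

lemma dyadic_shell:
  fixes T r :: real
  assumes "0 < T" "T < r"
  obtains k where "2 ^ k * T < r" "r \<le> 2 ^ Suc k * T"
proof -
  obtain n where "r / T < 2 ^ n" using real_arch_pow[of 2 "r / T"] by auto
  then have "r \<le> 2 ^ n * T" using assms by (simp add: divide_less_eq)
  then have "\<exists>k\<le>n. (\<forall>i<k. \<not> r \<le> 2 ^ i * T) \<and> r \<le> 2 ^ k * T"
    by (rule ex_least_nat_le)
  then obtain k where k: "\<forall>i<k. \<not> r \<le> 2 ^ i * T" "r \<le> 2 ^ k * T"
    by blast
  then obtain j where j: "k = Suc j" using assms by (cases k) auto
  show thesis
  proof
    show "2 ^ j * T < r" using k(1)[rule_format, of j] j by simp
    show "r \<le> 2 ^ Suc j * T" using k(2) j by simp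
  qed
qed

lemma ennreal_le_suminf:
  fixes f :: "nat \<Rightarrow> ennreal"
  shows "f k \<le> (\<Sum>i. f i)"
  using sum_le_suminf[of f "{k}"] by (simp add: summableI)

lemma suminf_ennreal_geometric:
  fixes D q :: real
  assumes "0 \<le> D" "0 \<le> q" "q < 1"
  shows "(\<Sum>k. ennreal (D * q ^ k)) = ennreal (D / (1 - q))"
proof (rule suminf_ennreal_eq)
  show "0 \<le> D * q ^ k" for k using assms by simp
  show "(\<lambda>k. D * q ^ k) sums (D / (1 - q))"
    using assms sums_mult[OF geometric_sums, of q D] by simp
qed

lemma powr_le_dyadic_sum:
  fixes r T \<beta> :: real
  assumes r: "0 \<le> r" and T: "0 < T" and \<beta>: "0 \<le> \<beta>"
  shows "ennreal (r powr \<beta>)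
    \<le> ennreal (T powr \<beta>) + (\<Sum>k. ennreal ((2 ^ Suc k * T) powr \<beta>) * indicator {2 ^ k * T<..} r)"
proof (cases "r \<le> T")
  case True
  then have "ennreal (r powr \<beta>) \<le> ennreal (T powr \<beta>)"
    using r \<beta> by (intro ennreal_leI powr_mono2) auto
  then show ?thesis by (rule add_increasing2[OF zero_le])
next
  case False
  then have "T < r" by simp
  then obtain k where k: "2 ^ k * T < r" "r \<le> 2 ^ Suc k * T"
    by (rule dyadic_shell[OF T])
  then have "ennreal (r powr \<beta>) \<le> ennreal ((2 ^ Suc k * T) powr \<beta>) * indicator {2 ^ k * T<..} r"
    using r \<beta> by (simp add: ennreal_leI powr_mono2)
  also have "\<dots> \<le> (\<Sum>k. ennreal ((2 ^ Suc k * T) powr \<beta>) * indicator {2 ^ k * T<..} r)"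
    by (rule ennreal_le_suminf)
  finally show ?thesis by (rule add_increasing[OF zero_le])
qed

lemma dyadic_term_eq:
  fixes T \<beta> m C :: real
  assumes T: "0 < T"
  shows "(2 ^ Suc k * T) powr \<beta> * (C * (2 ^ k * T) powr -m)
    = C * 2 powr \<beta> * T powr (\<beta> - m) * (2 powr (\<beta> - m)) ^ k"
proof -
  have "(2 ^ Suc k * T) powr \<beta> * (2 ^ k * T) powr -m = 2 powr \<beta> * (2 ^ k * T) powr (\<beta> - m)"
    using T by (simp add: powr_mult powr_diff powr_minus_divide field_simps)
  also have "\<dots> = 2 powr \<beta> * T powr (\<beta> - m) * (2 powr (\<beta> - m)) ^ k"
    using T by (simp add: powr_mult powr_realpow[symmetric] powr_powr mult.commute)
  finally show ?thesis by (simp add: algebra_simps)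
qed

lemma moment_le_of_tail_decay:
  fixes J :: "'a::euclidean_space \<Rightarrow> real" and m \<beta> T C :: real
  assumes J_int: "integrable lborel J" and J_nonneg: "\<And>x. J x \<ge> 0"
    and J_mass: "(\<integral>x. J x \<partial>lborel) = 1"
    and T: "0 < T" and C: "0 \<le> C"
    and tail: "\<And>t. T \<le> t \<Longrightarrow> (\<integral>x\<in>{x. t < norm x}. J x \<partial>lborel) \<le> C * t powr -m"
    and \<beta>: "0 < \<beta>" "\<beta> < m"
  shows "(\<integral>\<^sup>+x. ennreal (J x * norm x powr \<beta>) \<partial>lborel)
    \<le> ennreal (T powr \<beta> + C * 2 powr \<beta> * T powr (\<beta> - m) / (1 - 2 powr (\<beta> - m)))"
proof -
  have [measurable]: "J \<in> borel_measurable borel"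
    using borel_measurable_integrable[OF J_int] by simp
  define q where "q = 2 powr (\<beta> - m)"
  have q: "0 < q" "q < 1" unfolding q_def using \<beta> by (auto intro: powr_less_one)
  define c where "c k = (2 ^ Suc k * T) powr \<beta>" for k :: nat
  define shell where "shell k x = ennreal (J x) * indicator {x. 2 ^ k * T < norm x} x" for k x
  have "ennreal (J x * norm x powr \<beta>)
      \<le> ennreal (J x) * ennreal (T powr \<beta>) + (\<Sum>k. ennreal (c k) * shell k x)" for x
  proof -
    have "ennreal (J x * norm x powr \<beta>) = ennreal (J x) * ennreal (norm x powr \<beta>)"
      using J_nonneg by (simp add: ennreal_mult)
    also have "\<dots> \<le> ennreal (J x) * (ennreal (T powr \<beta>)
        + (\<Sum>k. ennreal (c k) * indicator {2 ^ k * T<..} (norm x)))"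
      unfolding c_def using T \<beta> by (intro mult_left_mono[OF powr_le_dyadic_sum]) auto
    also have "\<dots> = ennreal (J x) * ennreal (T powr \<beta>) + (\<Sum>k. ennreal (c k) * shell k x)"
      unfolding distrib_left ennreal_suminf_cmult[symmetric] shell_def
      by (intro arg_cong[where f = "(+) _"] arg_cong[where f = suminf] ext)
        (simp add: indicator_def mult.commute)
    finally show ?thesis .
  qed
  then have "(\<integral>\<^sup>+x. ennreal (J x * norm x powr \<beta>) \<partial>lborel)
      \<le> (\<integral>\<^sup>+x. ennreal (J x) * ennreal (T powr \<beta>) + (\<Sum>k. ennreal (c k) * shell k x) \<partial>lborel)"
    by (intro nn_integral_mono)
  also have "\<dots> = (\<integral>\<^sup>+x. ennreal (J x) \<partial>lborel) * ennreal (T powr \<beta>)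
      + (\<Sum>k. ennreal (c k) * (\<integral>\<^sup>+x. shell k x \<partial>lborel))"
    by (simp add: shell_def nn_integral_add nn_integral_multc nn_integral_suminf nn_integral_cmult)
  also have "\<dots> \<le> ennreal (T powr \<beta>) + (\<Sum>k. ennreal (C * 2 powr \<beta> * T powr (\<beta> - m) * q ^ k))"
  proof (intro add_mono suminf_le summableI)
    have "(\<integral>\<^sup>+x. ennreal (J x) \<partial>lborel) = 1"
      using J_int J_nonneg J_mass by (simp add: nn_integral_eq_integral)
    then show "(\<integral>\<^sup>+x. ennreal (J x) \<partial>lborel) * ennreal (T powr \<beta>) \<le> ennreal (T powr \<beta>)"
      by simp
    fix k
    have "(\<integral>\<^sup>+x. shell k x \<partial>lborel) = ennreal (\<integral>x\<in>{x. 2 ^ k * T < norm x}. J x \<partial>lborel)"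
      unfolding shell_def using J_int J_nonneg by (intro nn_set_integral_eq_set_integral) auto
    also have "\<dots> \<le> ennreal (C * (2 ^ k * T) powr -m)"
      using T by (intro ennreal_leI tail) simp
    finally have "ennreal (c k) * (\<integral>\<^sup>+x. shell k x \<partial>lborel)
        \<le> ennreal (c k * (C * (2 ^ k * T) powr -m))"
      by (simp add: c_def ennreal_mult' mult_left_mono)
    then show "ennreal (c k) * (\<integral>\<^sup>+x. shell k x \<partial>lborel)
        \<le> ennreal (C * 2 powr \<beta> * T powr (\<beta> - m) * q ^ k)"
      unfolding c_def q_def dyadic_term_eq[OF T] .
  qed
  also have "\<dots> = ennreal (T powr \<beta>) + ennreal (C * 2 powr \<beta> * T powr (\<beta> - m) / (1 - q))"
    using C q by (subst suminf_ennreal_geometric) auto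
  also have "\<dots> = ennreal (T powr \<beta> + C * 2 powr \<beta> * T powr (\<beta> - m) / (1 - q))"
    using C q by (intro ennreal_plus[symmetric]) auto
  finally show ?thesis unfolding q_def .
qed

lemma divide_one_minus_two_powr_le:
  fixes s :: real
  assumes s: "0 < s"
  shows "s / (1 - 2 powr -s) \<le> 1 / ln 2 + s"
proof -
  define E where "E = 2 powr s"
  have E: "1 + s * ln 2 \<le> E"
    unfolding E_def powr_def using exp_ge_add_one_self[of "s * ln 2"] by simp
  then have E1: "0 < E - 1" using s by (smt (verit) ln_gt_zero mult_pos_pos)
  have "s / (1 - 2 powr -s) = s * E / (E - 1)"
    using E1 by (simp add: E_def powr_minus_divide field_simps)
  also have "\<dots> \<le> 1 / ln 2 + s"
  proof -
    have "s \<le> (E - 1) / ln 2" using E by (simp add: le_divide_eq)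
    then have "s * E \<le> (1 / ln 2 + s) * (E - 1)" by (simp add: algebra_simps)
    then show ?thesis using E1 by (simp add: divide_le_eq)
  qed
  finally show ?thesis .
qed

lemma scaled_dyadic_moment_bound_le:
  fixes m \<beta> T C :: real
  assumes \<beta>: "0 < \<beta>" "\<beta> < m" and T: "1 \<le> T" and C: "0 \<le> C"
  shows "(m - \<beta>) * (T powr \<beta> + C * 2 powr \<beta> * T powr (\<beta> - m) / (1 - 2 powr (\<beta> - m)))
    \<le> m * T powr m + C * 2 powr m * (1 / ln 2 + m)"
proof -
  define \<rho> where "\<rho> = (m - \<beta>) / (1 - 2 powr (\<beta> - m))"
  have q: "0 < 1 - 2 powr (\<beta> - m)"
    using \<beta> by (simp add: powr_less_one)
  have head: "(m - \<beta>) * T powr \<beta> \<le> m * T powr m"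
    using \<beta> T by (intro mult_mono powr_mono) auto
  have weight: "2 powr \<beta> * T powr (\<beta> - m) \<le> 2 powr m"
    using mult_mono[of "2 powr \<beta>" "2 powr m" "T powr (\<beta> - m)" 1]
      \<beta> T powr_mono[of "\<beta> - m" 0 T] by simp
  have ratio: "\<rho> \<le> 1 / ln 2 + m"
    using divide_one_minus_two_powr_le[of "m - \<beta>"] \<beta> by (simp add: \<rho>_def)
  have "0 \<le> \<rho>" using \<beta> q by (simp add: \<rho>_def)
  then have "(m - \<beta>) * T powr \<beta> + C * (2 powr \<beta> * T powr (\<beta> - m) * \<rho>)
      \<le> m * T powr m + C * (2 powr m * (1 / ln 2 + m))"
    using head weight ratio C by (intro add_mono mult_left_mono[OF mult_mono]) auto
  then show ?thesis
    using q by (simp add: \<rho>_def algebra_simps)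
qed

theorem propositionA1:
  fixes a J u :: "'a::euclidean_space \<Rightarrow> real" and m \<epsilon>\<^sub>0 :: real
  assumes m_pos: "0 < m" and m_lt2: "m < 2"
    and a_cont: "continuous_on UNIV a"
    and a_bdd: "bounded (range a)"
    and a_pos_part: "\<exists>x. a x > 0"
    and a_limsup: "Limsup at_infinity (\<lambda>x. ereal (a x)) < 0"
    and J_int: "integrable lborel J"
    and J_nonneg: "\<And>x. J x \<ge> 0"
    and J_radial: "\<And>x y. norm x = norm y \<Longrightarrow> J x = J y"
    and J_mass: "(\<integral>x. J x \<partial>lborel) = 1"
    and eps0_pos: "\<epsilon>\<^sub>0 > 0"
    and u_cont: "continuous_on UNIV u"
    and u_supp: "compact (closure {x. u x \<noteq> 0})"
    and u_nonneg: "\<And>x. u x \<ge> 0"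
    and u_nontriv: "\<exists>x. u x \<noteq> 0"
    and subsol: "\<And>\<epsilon> x. 0 < \<epsilon> \<Longrightarrow> \<epsilon> < \<epsilon>\<^sub>0 \<Longrightarrow>
        (1 / \<epsilon> powr m) * (conv (rescaled_kernel J \<epsilon>) u x - u x) + u x * (a x - u x) \<ge> 0"
  shows "Limsup (at_left m)
           (\<lambda>\<beta>. ennreal (m - \<beta>) * (\<integral>\<^sup>+ x. ennreal (J x * norm x powr \<beta>) \<partial>lborel)) < \<infinity>
         \<and> (\<forall>\<beta>. 0 < \<beta> \<and> \<beta> < m \<longrightarrow> (\<integral>\<^sup>+ x. ennreal (J x * norm x powr \<beta>) \<partial>lborel) < \<infinity>)"
proof -
  let ?moment = "\<lambda>\<beta>. \<integral>\<^sup>+ x. ennreal (J x * norm x powr \<beta>) \<partial>lborel"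
  obtain C where C: "0 \<le> C"
    and "\<forall>\<^sub>F t in at_top. (\<integral>z\<in>{z. t < norm z}. J z \<partial>lborel) \<le> C * t powr -m"
    using kernel_tail_decay_of_subsolution[OF J_int J_nonneg J_mass eps0_pos u_cont u_supp u_nonneg
        u_nontriv subsol] by blast
  then obtain T where T: "1 \<le> T"
    and tail: "\<And>t. T \<le> t \<Longrightarrow> (\<integral>z\<in>{z. t < norm z}. J z \<partial>lborel) \<le> C * t powr -m"
    unfolding eventually_at_top_linorder by (metis max.bounded_iff max.cobounded1)
  define K where "K = m * T powr m + C * 2 powr m * (1 / ln 2 + m)"
  have moment: "?moment \<beta>
      \<le> ennreal (T powr \<beta> + C * 2 powr \<beta> * T powr (\<beta> - m) / (1 - 2 powr (\<beta> - m)))"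
    if "0 < \<beta>" "\<beta> < m" for \<beta>
    using moment_le_of_tail_decay[OF J_int J_nonneg J_mass _ C tail that] T by simp
  have "ennreal (m - \<beta>) * ?moment \<beta> \<le> ennreal K" if \<beta>: "0 < \<beta>" "\<beta> < m" for \<beta>
  proof -
    have "ennreal (m - \<beta>) * ?moment \<beta>
        \<le> ennreal ((m - \<beta>) * (T powr \<beta> + C * 2 powr \<beta> * T powr (\<beta> - m) / (1 - 2 powr (\<beta> - m))))"
      using moment[OF \<beta>] \<beta> by (simp add: ennreal_mult' mult_left_mono)
    also have "\<dots> \<le> ennreal K"
      unfolding K_def using scaled_dyadic_moment_bound_le[OF \<beta> T C] by (rule ennreal_leI)
    finally show ?thesis .
  qed
  then have "Limsup (at_left m) (\<lambda>\<beta>. ennreal (m - \<beta>) * ?moment \<beta>) \<le> ennreal K"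
    by (intro Limsup_bounded eventually_mono[OF eventually_at_left_real[OF m_pos]]) auto
  moreover have "?moment \<beta> < \<infinity>" if "0 < \<beta>" "\<beta> < m" for \<beta>
    using moment[OF that] by (simp add: le_less_trans)
  ultimately show ?thesis
    by (auto simp: le_less_trans)
qed

end
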